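(* Let $(\Omega,\mathcal F)$ be a measurable space, $\mathcal X$ the set of bounded measurable functions, $\mathcal P_1,\dots,\mathcal P_n$ nonempty sets of probability measures on $(\Omega,\mathcal F)$, and $\alpha_1,\dots,\alpha_n\in(0,1)$. Then for all $X\in\mathcal X$, $$\mathop{\square}_{i=1}^n\sup_{\mathbb Q\in\mathcal P_i}\mathrm{VaR}^{\mathbb Q}_{\alpha_i}(X)=\inf\{x\in\mathbb R:\{X>x\}\in\mathcal C\},\qquad \mathcal C=\Big\{\bigcup_{i=1}^nA_i: A_i\in\mathcal F,\ \sup_{\mathbb Q\in\mathcal P_i}\mathbb Q(A_i)\le\alpha_i,\ i=1,\dots,n\Big\}.$$
   Context: For a probability $\mathbb Q$ and $\alpha\in(0,1)$, $\mathrm{VaR}^{\mathbb Q}_\alpha(X)=\inf\{x\in\mathbb R:\mathbb Q(X\ge x)\le\alpha\}$. Inf-convolution: $\mathop{\square}_{i=1}^n\rho_i(X)=\inf\{\sum_{i=1}^n\rho_i(X_i): X_i\in\mathcal X,\ \sum_iX_i=X\}$. *)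

theory Defs
  imports "HOL-Probability.Probability"
begin

definition prob_on :: "'a measure \<Rightarrow> 'a measure \<Rightarrow> bool" where
  "prob_on M Q \<longleftrightarrow> prob_space Q \<and> sets Q = sets M"

definition bdd_meas :: "'a measure \<Rightarrow> ('a \<Rightarrow> real) set" where
  "bdd_meas M = {X. X \<in> borel_measurable M \<and> (\<exists>B. \<forall>\<omega>\<in>space M. \<bar>X \<omega>\<bar> \<le> B)}"

definition VaR :: "'a measure \<Rightarrow> real \<Rightarrow> ('a \<Rightarrow> real) \<Rightarrow> real" where
  "VaR Q \<alpha> X = Inf {x::real. measure Q {\<omega>\<in>space Q. X \<omega> \<ge> x} \<le> \<alpha>}"

definition inf_conv :: "'a measure \<Rightarrow> nat \<Rightarrow> (nat \<Rightarrow> ('a \<Rightarrow> real) \<Rightarrow> ereal) \<Rightarrow> ('a \<Rightarrow> real) \<Rightarrow> ereal" where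
  "inf_conv M n \<rho> X = Inf {(\<Sum>i<n. \<rho> i (Xs i)) | Xs.
      (\<forall>i<n. Xs i \<in> bdd_meas M) \<and> (\<forall>\<omega>\<in>space M. (\<Sum>i<n. Xs i \<omega>) = X \<omega>)}"

definition sup_VaR :: "'a measure set \<Rightarrow> real \<Rightarrow> ('a \<Rightarrow> real) \<Rightarrow> ereal" where
  "sup_VaR PP \<alpha> X = (SUP Q\<in>PP. ereal (VaR Q \<alpha> X))"

definition calC :: "'a measure \<Rightarrow> nat \<Rightarrow> (nat \<Rightarrow> 'a measure set) \<Rightarrow> (nat \<Rightarrow> real) \<Rightarrow> 'a set set" where
  "calC M n P \<alpha> = {(\<Union>i<n. A i) | A.
      \<forall>i<n. A i \<in> sets M \<and> (SUP Q\<in>P i. ereal (measure Q (A i))) \<le> ereal (\<alpha> i)}"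

end

theory Submission
  imports Defs
begin

text \<open>Write \<open>\<rho>\<^sub>i\<close> for the worst-case VaR over \<open>P\<^sub>i\<close>. For bounded \<open>Y\<close>, since \<open>Q(Y \<ge> z)\<close> increases to
  \<open>Q(Y > y)\<close> as \<open>z\<close> decreases to \<open>y\<close>, we have \<open>\<rho>\<^sub>i(Y) \<le> y\<close> iff \<open>Q(Y > y) \<le> \<alpha>\<^sub>i\<close> for all \<open>Q \<in> P\<^sub>i\<close>.
  If \<open>X = \<Sum>\<^sub>i X\<^sub>i\<close>, then \<open>{X > \<Sum>\<^sub>i \<rho>\<^sub>i(X\<^sub>i)}\<close> is covered by the sets \<open>{X\<^sub>i > \<rho>\<^sub>i(X\<^sub>i)}\<close>,
  so it belongs to \<open>C\<close>. Conversely, if \<open>{X > x} = \<Union>\<^sub>i A\<^sub>i \<in> C\<close>, disjointify the cover, give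
  the excess \<open>(X - x)\<^sup>+\<close> on the \<open>i\<close>-th piece to \<open>X\<^sub>i\<close> and the rest \<open>min X x\<close> to \<open>X\<^sub>0\<close>; then
  \<open>{X\<^sub>0 > x} \<subseteq> A\<^sub>0\<close> and \<open>{X\<^sub>i > 0} \<subseteq> A\<^sub>i\<close> for \<open>i > 0\<close>, so \<open>\<Sum>\<^sub>i \<rho>\<^sub>i(X\<^sub>i) \<le> x\<close>.\<close>

lemma (in finite_measure) measure_greater_le_iff:
  fixes Y :: "'a \<Rightarrow> real"
  assumes Y[measurable]: "Y \<in> borel_measurable M"
  shows "measure M {\<omega>\<in>space M. y < Y \<omega>} \<le> a
    \<longleftrightarrow> (\<forall>z>y. measure M {\<omega>\<in>space M. z \<le> Y \<omega>} \<le> a)"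
proof (intro iffI allI impI)
  fix z assume "measure M {\<omega>\<in>space M. y < Y \<omega>} \<le> a" "y < z"
  moreover have "measure M {\<omega>\<in>space M. z \<le> Y \<omega>} \<le> measure M {\<omega>\<in>space M. y < Y \<omega>}"
    using \<open>y < z\<close> by (intro finite_measure_mono) auto
  ultimately show "measure M {\<omega>\<in>space M. z \<le> Y \<omega>} \<le> a"
    by linarith
next
  assume le: "\<forall>z>y. measure M {\<omega>\<in>space M. z \<le> Y \<omega>} \<le> a"
  define C where "C k = {\<omega>\<in>space M. y + 1 / Suc k \<le> Y \<omega>}" for k :: nat
  have "incseq C"
  proof (rule incseq_SucI)
    fix k
    have "1 / real (Suc (Suc k)) \<le> 1 / Suc k"
      by (simp add: frac_le)
    then show "C k \<subseteq> C (Suc k)"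
      unfolding C_def by (auto simp del: of_nat_Suc)
  qed
  moreover have "range C \<subseteq> sets M"
    unfolding C_def by auto
  ultimately have "(\<lambda>k. measure M (C k)) \<longlonglongrightarrow> measure M (\<Union>k. C k)"
    by (rule finite_Lim_measure_incseq[rotated])
  moreover have "measure M (C k) \<le> a" for k
    using le unfolding C_def by simp
  ultimately have "measure M (\<Union>k. C k) \<le> a"
    by (intro LIMSEQ_le_const2) auto
  moreover have "(\<Union>k. C k) = {\<omega>\<in>space M. y < Y \<omega>}"
  proof (intro antisym subsetI)
    fix \<omega> assume "\<omega> \<in> {\<omega>\<in>space M. y < Y \<omega>}"
    then obtain k where "inverse (real (Suc k)) < Y \<omega> - y" "\<omega> \<in> space M"
      using reals_Archimedean[of "Y \<omega> - y"] by auto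
    then show "\<omega> \<in> (\<Union>k. C k)"
      by (auto simp: C_def field_simps intro!: exI[of _ k])
  qed (auto simp: C_def intro: less_le_trans[rotated])
  ultimately show "measure M {\<omega>\<in>space M. y < Y \<omega>} \<le> a"
    by simp
qed

lemma (in prob_space) VaR_le_iff:
  fixes Y :: "'a \<Rightarrow> real"
  assumes Y: "Y \<in> borel_measurable M" and B: "\<And>\<omega>. \<omega> \<in> space M \<Longrightarrow> \<bar>Y \<omega>\<bar> \<le> B"
    and a: "0 \<le> a" "a < 1"
  shows "VaR M a Y \<le> y \<longleftrightarrow> prob {\<omega>\<in>space M. y < Y \<omega>} \<le> a"
proof -
  define S where "S = {x. prob {\<omega>\<in>space M. x \<le> Y \<omega>} \<le> a}"
  have upward: "t \<in> S" if "s \<in> S" "s \<le> t" for s t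
  proof -
    have "prob {\<omega>\<in>space M. t \<le> Y \<omega>} \<le> prob {\<omega>\<in>space M. s \<le> Y \<omega>}"
      using \<open>s \<le> t\<close> Y by (intro finite_measure_mono) auto
    with \<open>s \<in> S\<close> show ?thesis
      by (simp add: S_def)
  qed
  have "B + 1 \<in> S"
  proof -
    have "{\<omega>\<in>space M. B + 1 \<le> Y \<omega>} = {}"
      using B by force
    with a show ?thesis
      unfolding S_def mem_Collect_eq by (metis measure_empty)
  qed
  moreover have "bdd_below S"
  proof (rule bdd_belowI)
    fix s assume "s \<in> S"
    show "-B \<le> s"
    proof (rule ccontr)
      assume "\<not> -B \<le> s"
      then have "{\<omega>\<in>space M. s \<le> Y \<omega>} = space M"
        using B by force
      with \<open>s \<in> S\<close> a show False
        by (simp add: S_def prob_space)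
    qed
  qed
  ultimately have "Inf S \<le> y \<longleftrightarrow> (\<forall>z>y. z \<in> S)"
  proof (intro iffI allI impI)
    fix z assume "Inf S \<le> y" "y < z"
    then obtain s where "s \<in> S" "s < z"
      using cInf_less_iff[of S z] \<open>B + 1 \<in> S\<close> \<open>bdd_below S\<close> by auto
    then show "z \<in> S"
      using upward by auto
  next
    assume "\<forall>z>y. z \<in> S"
    then show "Inf S \<le> y"
      using \<open>bdd_below S\<close> by (auto intro: dense_ge cInf_lower)
  qed
  then show ?thesis
    unfolding VaR_def S_def[symmetric] using measure_greater_le_iff[OF Y] by (simp add: S_def)
qed

lemma prob_onD:
  assumes "prob_on M Q"
  shows "prob_space Q" "sets Q = sets M" "space Q = space M"
  using assms sets_eq_imp_space_eq unfolding prob_on_def by auto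

lemma prob_on_measure_mono:
  assumes "prob_on M Q" "B \<in> sets M" "A \<subseteq> B"
  shows "measure Q A \<le> measure Q B"
proof -
  interpret prob_space Q
    using assms(1) by (rule prob_onD)
  show ?thesis
    using assms prob_onD(2) by (intro finite_measure_mono) auto
qed

lemma sup_VaR_le_iff:
  assumes PP: "\<And>Q. Q \<in> PP \<Longrightarrow> prob_on M Q" and a: "0 \<le> a" "a < 1"
    and Y: "Y \<in> bdd_meas M"
  shows "sup_VaR PP a Y \<le> ereal y \<longleftrightarrow> (\<forall>Q\<in>PP. measure Q {\<omega>\<in>space M. y < Y \<omega>} \<le> a)"
proof -
  obtain B where Y_meas: "Y \<in> borel_measurable M" and B: "\<And>\<omega>. \<omega> \<in> space M \<Longrightarrow> \<bar>Y \<omega>\<bar> \<le> B"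
    using Y unfolding bdd_meas_def by auto
  have "VaR Q a Y \<le> y \<longleftrightarrow> measure Q {\<omega>\<in>space M. y < Y \<omega>} \<le> a" if "Q \<in> PP" for Q
  proof -
    note Q = prob_onD[OF PP[OF that]]
    interpret prob_space Q
      by (fact Q(1))
    have "Y \<in> borel_measurable Q"
      using Y_meas Q(2) by (simp cong: measurable_cong_sets)
    then show ?thesis
      using VaR_le_iff[of Y B a y] B a Q(3) by simp
  qed
  then show ?thesis
    unfolding sup_VaR_def by (auto simp: SUP_le_iff)
qed

lemma sup_VaR_finite:
  assumes PP: "\<And>Q. Q \<in> PP \<Longrightarrow> prob_on M Q" and "PP \<noteq> {}" and a: "0 \<le> a" "a < 1"
    and Y: "Y \<in> bdd_meas M"
  obtains r where "sup_VaR PP a Y = ereal r"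
proof -
  obtain B where B: "\<And>\<omega>. \<omega> \<in> space M \<Longrightarrow> \<bar>Y \<omega>\<bar> \<le> B"
    using Y unfolding bdd_meas_def by auto
  have no_excess: "{\<omega>\<in>space M. B < Y \<omega>} = {}"
    using B by force
  have "\<forall>Q\<in>PP. measure Q {\<omega>\<in>space M. B < Y \<omega>} \<le> a"
    using a unfolding no_excess by simp
  then have "sup_VaR PP a Y \<le> ereal B"
    using sup_VaR_le_iff[of PP M a Y B] PP a Y by blast
  moreover obtain Q where Q: "Q \<in> PP"
    using \<open>PP \<noteq> {}\<close> by blast
  have "{\<omega>\<in>space M. -B - 1 < Y \<omega>} = space Q"
    using B prob_onD(3)[OF PP[OF Q]] by force
  then have "measure Q {\<omega>\<in>space M. -B - 1 < Y \<omega>} = 1"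
    using prob_space.prob_space[OF prob_onD(1)[OF PP[OF Q]]] by simp
  then have "\<not> sup_VaR PP a Y \<le> ereal (-B - 1)"
    using sup_VaR_le_iff[of PP M a Y "-B - 1"] PP a Y Q by force
  ultimately show ?thesis
    using that by (cases "sup_VaR PP a Y") auto
qed

lemma bdd_meas_split_along_cover:
  fixes X :: "'a \<Rightarrow> real" and A :: "nat \<Rightarrow> 'a set"
  assumes "0 < n" and X: "X \<in> bdd_meas M"
    and A: "\<And>i. i < n \<Longrightarrow> A i \<in> sets M"
    and cover: "{\<omega>\<in>space M. x < X \<omega>} = (\<Union>i<n. A i)"
  obtains Xs t where "\<And>i. i < n \<Longrightarrow> Xs i \<in> bdd_meas M"
    and "\<And>\<omega>. \<omega> \<in> space M \<Longrightarrow> (\<Sum>i<n. Xs i \<omega>) = X \<omega>"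
    and "(\<Sum>i<n. t i) = x"
    and "\<And>i \<omega>. i < n \<Longrightarrow> \<omega> \<in> space M \<Longrightarrow> t i < Xs i \<omega> \<Longrightarrow> \<omega> \<in> A i"
proof -
  obtain B where X_meas[measurable]: "X \<in> borel_measurable M"
    and B: "\<And>\<omega>. \<omega> \<in> space M \<Longrightarrow> \<bar>X \<omega>\<bar> \<le> B"
    using X unfolding bdd_meas_def by auto
  define D where "D = disjointed A"
  define t where "t i = (if i = 0 then x else 0)" for i :: nat
  define Xs where "Xs i \<omega> = (if i = 0 then min (X \<omega>) x else 0) + indicator (D i) \<omega> * (X \<omega> - x)"
    for i \<omega>
  have D_sets: "D i \<in> sets M" if "i < n" for i
    unfolding D_def disjointed_def using A that by (intro sets.Diff sets.finite_UN) auto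
  have "Xs i \<in> bdd_meas M" if "i < n" for i
  proof -
    have [measurable]: "D i \<in> sets M"
      using D_sets that .
    have "Xs i \<in> borel_measurable M"
      unfolding Xs_def by measurable
    moreover have "\<bar>Xs i \<omega>\<bar> \<le> 2 * (B + \<bar>x\<bar>)" if "\<omega> \<in> space M" for \<omega>
      using B[OF that] by (auto simp: Xs_def indicator_def)
    ultimately show ?thesis
      unfolding bdd_meas_def by blast
  qed
  moreover have "(\<Sum>i<n. Xs i \<omega>) = X \<omega>" if "\<omega> \<in> space M" for \<omega>
  proof -
    have "(\<Sum>i<n. indicator (D i) \<omega> :: real) = indicator (\<Union>i<n. D i) \<omega>"
      unfolding D_def
      by (intro indicator_UN_disjoint[symmetric] disjoint_family_on_mono[OF _ disjoint_family_disjointed]) auto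
    also have "(\<Union>i<n. D i) = {\<omega>\<in>space M. x < X \<omega>}"
      unfolding D_def cover using finite_UN_disjointed_eq[of A n] by (simp add: atLeast0LessThan)
    finally show ?thesis
      using \<open>0 < n\<close> that by (simp add: Xs_def sum.distrib flip: sum_distrib_right) (simp add: indicator_def)
  qed
  moreover have "(\<Sum>i<n. t i) = x"
    using \<open>0 < n\<close> by (simp add: t_def)
  moreover have "\<omega> \<in> A i" if "t i < Xs i \<omega>" for i \<omega>
  proof -
    have "\<omega> \<in> D i"
      using that by (rule contrapos_pp) (simp add: t_def Xs_def)
    then show ?thesis
      using disjointed_subset[of A i] by (auto simp: D_def)
  qed
  ultimately show ?thesis
    using that by blast
qed

lemma inf_conv_sup_VaR_le_if_calC:
  assumes "0 < n"
    and PP: "\<And>i Q. i < n \<Longrightarrow> Q \<in> P i \<Longrightarrow> prob_on M Q"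
    and \<alpha>: "\<And>i. i < n \<Longrightarrow> 0 \<le> \<alpha> i \<and> \<alpha> i < 1"
    and X: "X \<in> bdd_meas M"
    and "{\<omega>\<in>space M. x < X \<omega>} \<in> calC M n P \<alpha>"
  shows "inf_conv M n (\<lambda>i. sup_VaR (P i) (\<alpha> i)) X \<le> ereal x"
proof -
  obtain A where cover: "{\<omega>\<in>space M. x < X \<omega>} = (\<Union>i<n. A i)"
    and A: "\<And>i. i < n \<Longrightarrow> A i \<in> sets M"
    and A_small: "\<And>i. i < n \<Longrightarrow> (SUP Q\<in>P i. ereal (measure Q (A i))) \<le> ereal (\<alpha> i)"
    using assms(5) unfolding calC_def by auto
  obtain Xs t where Xs: "\<And>i. i < n \<Longrightarrow> Xs i \<in> bdd_meas M"
    and sum_Xs: "\<And>\<omega>. \<omega> \<in> space M \<Longrightarrow> (\<Sum>i<n. Xs i \<omega>) = X \<omega>"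
    and sum_t: "(\<Sum>i<n. t i) = x"
    and exceed: "\<And>i \<omega>. i < n \<Longrightarrow> \<omega> \<in> space M \<Longrightarrow> t i < Xs i \<omega> \<Longrightarrow> \<omega> \<in> A i"
    using bdd_meas_split_along_cover[OF \<open>0 < n\<close> X A cover] by blast
  have "sup_VaR (P i) (\<alpha> i) (Xs i) \<le> ereal (t i)" if i: "i < n" for i
  proof -
    have "measure Q {\<omega>\<in>space M. t i < Xs i \<omega>} \<le> \<alpha> i" if Q: "Q \<in> P i" for Q
    proof -
      have "measure Q {\<omega>\<in>space M. t i < Xs i \<omega>} \<le> measure Q (A i)"
        using exceed[OF i] by (intro prob_on_measure_mono[OF PP[OF i Q] A[OF i]]) auto
      also have "\<dots> \<le> \<alpha> i"
        using A_small[OF i] Q by (meson SUP_upper order_trans ereal_less_eq(3))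
      finally show ?thesis .
    qed
    then show ?thesis
      using sup_VaR_le_iff[of "P i" M "\<alpha> i" "Xs i" "t i"] PP[OF i] \<alpha>[OF i] Xs[OF i] by blast
  qed
  then have "(\<Sum>i<n. sup_VaR (P i) (\<alpha> i) (Xs i)) \<le> ereal x"
    using sum_mono[of "{..<n}" "\<lambda>i. sup_VaR (P i) (\<alpha> i) (Xs i)" "\<lambda>i. ereal (t i)"]
    by (simp add: sum_t sum_ereal)
  moreover have "inf_conv M n (\<lambda>i. sup_VaR (P i) (\<alpha> i)) X \<le> (\<Sum>i<n. sup_VaR (P i) (\<alpha> i) (Xs i))"
    unfolding inf_conv_def using Xs sum_Xs by (intro Inf_lower) auto
  ultimately show ?thesis
    by (rule order_trans[rotated])
qed

lemma superlevel_set_in_calC: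
  assumes PP: "\<And>i Q. i < n \<Longrightarrow> Q \<in> P i \<Longrightarrow> prob_on M Q"
    and \<alpha>: "\<And>i. i < n \<Longrightarrow> 0 \<le> \<alpha> i \<and> \<alpha> i < 1"
    and Xs: "\<And>i. i < n \<Longrightarrow> Xs i \<in> bdd_meas M"
    and sum_Xs: "\<And>\<omega>. \<omega> \<in> space M \<Longrightarrow> (\<Sum>i<n. Xs i \<omega>) = X \<omega>"
    and r: "\<And>i. i < n \<Longrightarrow> sup_VaR (P i) (\<alpha> i) (Xs i) \<le> ereal (r i)"
  shows "{\<omega>\<in>space M. (\<Sum>i<n. r i) < X \<omega>} \<in> calC M n P \<alpha>"
proof -
  have Xs_meas[measurable]: "Xs i \<in> borel_measurable M" if "i < n" for i
    using Xs[OF that] unfolding bdd_meas_def by blast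
  define A where "A i = {\<omega>\<in>space M. r i < Xs i \<omega> \<and> (\<Sum>j<n. r j) < (\<Sum>j<n. Xs j \<omega>)}" for i
  have "{\<omega>\<in>space M. (\<Sum>i<n. r i) < X \<omega>} = (\<Union>i<n. A i)"
  proof (intro antisym subsetI)
    fix \<omega> assume \<omega>: "\<omega> \<in> {\<omega>\<in>space M. (\<Sum>i<n. r i) < X \<omega>}"
    then have "\<not> (\<forall>i<n. Xs i \<omega> \<le> r i)"
      using sum_mono[of "{..<n}" "\<lambda>i. Xs i \<omega>" r] sum_Xs by force
    then show "\<omega> \<in> (\<Union>i<n. A i)"
      using \<omega> sum_Xs by (auto simp: A_def not_le)
  qed (auto simp: A_def sum_Xs)
  moreover have "A i \<in> sets M" if "i < n" for i
    unfolding A_def using that by measurable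
  moreover have "(SUP Q\<in>P i. ereal (measure Q (A i))) \<le> ereal (\<alpha> i)" if i: "i < n" for i
  proof (rule SUP_least)
    fix Q assume Q: "Q \<in> P i"
    have "measure Q (A i) \<le> measure Q {\<omega>\<in>space M. r i < Xs i \<omega>}"
      using i by (intro prob_on_measure_mono[OF PP[OF i Q]]) (auto simp: A_def)
    also have "\<dots> \<le> \<alpha> i"
      using sup_VaR_le_iff[of "P i" M "\<alpha> i" "Xs i" "r i"] PP[OF i] \<alpha>[OF i] Xs[OF i] r[OF i] Q by blast
    finally show "ereal (measure Q (A i)) \<le> ereal (\<alpha> i)"
      by simp
  qed
  ultimately show ?thesis
    unfolding calC_def by blast
qed

lemma Inf_calC_le_sum_sup_VaR:
  assumes PP: "\<And>i Q. i < n \<Longrightarrow> Q \<in> P i \<Longrightarrow> prob_on M Q"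
    and ne: "\<And>i. i < n \<Longrightarrow> P i \<noteq> {}"
    and \<alpha>: "\<And>i. i < n \<Longrightarrow> 0 \<le> \<alpha> i \<and> \<alpha> i < 1"
    and Xs: "\<And>i. i < n \<Longrightarrow> Xs i \<in> bdd_meas M"
    and sum_Xs: "\<And>\<omega>. \<omega> \<in> space M \<Longrightarrow> (\<Sum>i<n. Xs i \<omega>) = X \<omega>"
  shows "Inf {ereal x | x. {\<omega>\<in>space M. x < X \<omega>} \<in> calC M n P \<alpha>}
    \<le> (\<Sum>i<n. sup_VaR (P i) (\<alpha> i) (Xs i))"
proof -
  have "\<forall>i<n. \<exists>r. sup_VaR (P i) (\<alpha> i) (Xs i) = ereal r"
    using sup_VaR_finite PP ne \<alpha> Xs by metis
  then obtain r where r: "\<And>i. i < n \<Longrightarrow> sup_VaR (P i) (\<alpha> i) (Xs i) = ereal (r i)"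
    by metis
  then have "(\<Sum>i<n. sup_VaR (P i) (\<alpha> i) (Xs i)) = ereal (\<Sum>i<n. r i)"
    by simp
  moreover have "{\<omega>\<in>space M. (\<Sum>i<n. r i) < X \<omega>} \<in> calC M n P \<alpha>"
    using PP \<alpha> Xs sum_Xs r by (intro superlevel_set_in_calC) auto
  ultimately show ?thesis
    by (auto intro: Inf_lower)
qed

theorem corollary1:
  fixes M :: "'a measure" and n :: nat
    and P :: "nat \<Rightarrow> 'a measure set" and \<alpha> :: "nat \<Rightarrow> real"
    and X :: "'a \<Rightarrow> real"
  assumes "n \<ge> 1"
    and "\<And>i. i < n \<Longrightarrow> P i \<noteq> {}"
    and "\<And>i Q. i < n \<Longrightarrow> Q \<in> P i \<Longrightarrow> prob_on M Q"
    and "\<And>i. i < n \<Longrightarrow> 0 < \<alpha> i \<and> \<alpha> i < 1"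
    and "X \<in> bdd_meas M"
  shows "inf_conv M n (\<lambda>i. sup_VaR (P i) (\<alpha> i)) X
       = Inf {ereal x | x. {\<omega>\<in>space M. X \<omega> > x} \<in> calC M n P \<alpha>}"
proof (rule antisym)
  have \<alpha>: "0 \<le> \<alpha> i \<and> \<alpha> i < 1" if "i < n" for i
    using assms(4)[OF that] by simp
  show "inf_conv M n (\<lambda>i. sup_VaR (P i) (\<alpha> i)) X
      \<le> Inf {ereal x | x. {\<omega>\<in>space M. X \<omega> > x} \<in> calC M n P \<alpha>}"
    using assms(1,3,5) \<alpha> by (auto intro!: Inf_greatest inf_conv_sup_VaR_le_if_calC)
  show "Inf {ereal x | x. {\<omega>\<in>space M. X \<omega> > x} \<in> calC M n P \<alpha>}
      \<le> inf_conv M n (\<lambda>i. sup_VaR (P i) (\<alpha> i)) X"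
    unfolding inf_conv_def using assms(2,3) \<alpha>
    by (auto intro!: Inf_greatest Inf_calC_le_sum_sup_VaR)
qed

end
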